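(* There exist context-free languages $L_1$ and $L_2$ such that $L_1 \stackrel{\rm pgi}{\leftarrow} L_1$ and $L_2 \stackrel{\rm sgi}{\leftarrow} L_2$ are not context-free.
   Context: Prefix-guided insertion: $x \stackrel{\rm pgi}{\leftarrow} y = \{ x_1 y_1 y_2 x_2 \mid x = x_1 y_1 x_2,\ y = y_1 y_2,\ y_1 \neq \varepsilon \}$. Suffix-guided insertion: $x \stackrel{\rm sgi}{\leftarrow} y = \{ x_1 y_1 y_2 x_2 \mid x = x_1 y_2 x_2,\ y = y_1 y_2,\ y_2 \neq \varepsilon \}$. Both are extended to languages by union over all pairs of strings. *)

theory Defs
  imports Main
begin

datatype ('n, 't) sym = N 'n | T 't

type_synonym ('n, 't) prod = "'n \<times> ('n, 't) sym list"

inductive derive1 :: "('n, 't) prod set \<Rightarrow> ('n, 't) sym list \<Rightarrow> ('n, 't) sym list \<Rightarrow> bool"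
  for P where
  "(A, w) \<in> P \<Longrightarrow> derive1 P (u @ [N A] @ v) (u @ w @ v)"

definition derives :: "('n, 't) prod set \<Rightarrow> ('n, 't) sym list \<Rightarrow> ('n, 't) sym list \<Rightarrow> bool" where
  "derives P = (derive1 P)\<^sup>*\<^sup>*"

definition Lang :: "('n, 't) prod set \<Rightarrow> 'n \<Rightarrow> 't list set" where
  "Lang P S = {w. derives P [N S] (map T w)}"

text \<open>A language is context-free if it is generated by a finite context-free
grammar (nonterminals w.l.o.g. natural numbers).\<close>
definition CFL :: "'t list set \<Rightarrow> bool" where
  "CFL L \<longleftrightarrow> (\<exists>(P :: (nat, 't) prod set) S. finite P \<and> L = Lang P S)"

definition pgi :: "'a list \<Rightarrow> 'a list \<Rightarrow> 'a list set" where
  "pgi x y = {x1 @ y1 @ y2 @ x2 | x1 y1 y2 x2.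
               x = x1 @ y1 @ x2 \<and> y = y1 @ y2 \<and> y1 \<noteq> []}"

definition sgi :: "'a list \<Rightarrow> 'a list \<Rightarrow> 'a list set" where
  "sgi x y = {x1 @ y1 @ y2 @ x2 | x1 y1 y2 x2.
               x = x1 @ y2 @ x2 \<and> y = y1 @ y2 \<and> y2 \<noteq> []}"

definition pgi_lang :: "'a list set \<Rightarrow> 'a list set \<Rightarrow> 'a list set" where
  "pgi_lang L1 L2 = (\<Union>x\<in>L1. \<Union>y\<in>L2. pgi x y)"

definition sgi_lang :: "'a list set \<Rightarrow> 'a list set \<Rightarrow> 'a list set" where
  "sgi_lang L1 L2 = (\<Union>x\<in>L1. \<Union>y\<in>L2. sgi x y)"

end

(*
  Take L = {a^n # b^n $} \<union> {# b^n $ c^n}, which is context-free. Guided by the prefix # b^n $,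
  the word # b^n $ c^n can be inserted into a^n # b^n $, and guided by the suffix # b^n $, the word
  a^n # b^n $ can be inserted into # b^n $ c^n; both give a^n # b^n $ c^n. Conversely, a word of
  either insertion language with a single # and a single $ and containing both a and c is
  balanced in a, b, c, because the guide pins down where the inserted word meets the host word.
  Pumping a^n # b^n $ c^n now fails as for a^n b^n c^n: pumping down must keep the markers, so the
  two pumped factors avoid them and each lies inside one block, yet pumping up must raise all
  three counts equally.

  The pumping lemma itself is proved with parse trees: a tree whose fringe exceeds the bound
  repeats a nonterminal along a path, and starting from a derivation of minimal length ensures
  that the pumped factors are not both empty.
*)

theory Submission
  imports Defs "HOL-Library.Sublist"
begin

lemma derive1_context: "derive1 P xs ys \<Longrightarrow> derive1 P (p @ xs @ q) (p @ ys @ q)"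
proof (induction rule: derive1.induct)
  case (1 A w u v)
  then show ?case using derive1.intros[of A w P "p @ u" "v @ q"] by simp
qed

lemma relpowp_derive1_context:
  "(derive1 P ^^ n) xs ys \<Longrightarrow> (derive1 P ^^ n) (p @ xs @ q) (p @ ys @ q)"
proof (induction n arbitrary: ys)
  case (Suc n)
  from Suc.prems obtain zs where "(derive1 P ^^ n) xs zs" "derive1 P zs ys"
    by (rule relpowp_Suc_E)
  with Suc.IH derive1_context show ?case by (metis relpowp_Suc_I)
qed simp

lemma relpowp_derive1_append:
  assumes "(derive1 P ^^ m) xs xs'" and "(derive1 P ^^ n) ys ys'"
  shows "(derive1 P ^^ (m + n)) (xs @ ys) (xs' @ ys')"
proof -
  have "(derive1 P ^^ m) ([] @ xs @ ys) ([] @ xs' @ ys)"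
    using assms(1) by (rule relpowp_derive1_context)
  moreover have "(derive1 P ^^ n) (xs' @ ys @ []) (xs' @ ys' @ [])"
    using assms(2) by (rule relpowp_derive1_context)
  ultimately show ?thesis using relpowp_trans by fastforce
qed

lemma derives_context: "derives P xs ys \<Longrightarrow> derives P (p @ xs @ q) (p @ ys @ q)"
  unfolding derives_def
  by (induction rule: rtranclp_induct) (auto intro: rtranclp.rtrancl_into_rtrancl derive1_context)

lemma derives_trans [trans]: "derives P xs ys \<Longrightarrow> derives P ys zs \<Longrightarrow> derives P xs zs"
  unfolding derives_def by (rule rtranclp_trans)

lemma derives_iterate:
  assumes "derives P [N A] (map T v @ [N A] @ map T y)"
  shows "derives P [N A] (map T (concat (replicate k v)) @ [N A] @ map T (concat (replicate k y)))"
proof (induction k)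
  case 0
  show ?case by (simp add: derives_def)
next
  case (Suc k)
  have "concat (replicate (Suc k) y) = concat (replicate k y) @ y"
    by (induction k) simp_all
  moreover have "derives P [N A] (map T v @ (map T (concat (replicate k v)) @ [N A]
          @ map T (concat (replicate k y))) @ map T y)"
    using derives_trans[OF assms derives_context[OF Suc.IH]] by simp
  ultimately show ?case by simp
qed

lemma derives_prod: "(A, w) \<in> P \<Longrightarrow> derives P (u @ [N A] @ v) (u @ w @ v)"
  unfolding derives_def by (rule r_into_rtranclp) (rule derive1.intros)

lemma derives_replicate:
  assumes "(A, [T a, N A, T b]) \<in> P"
  shows "derives P [N A] (map T (replicate n a) @ [N A] @ map T (replicate n b))"
proof (induction n)
  case 0
  show ?case by (simp add: derives_def)
next
  case (Suc n)
  have "derives P [N A] (map T (replicate n a) @ [T a, N A, T b] @ map T (replicate n b))"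
    using derives_trans[OF Suc.IH derives_prod[OF assms]] .
  then show ?case by (simp add: replicate_append_same[symmetric])
qed

section \<open>Parse trees\<close>

datatype ('n, 't) ptree = Leaf 't | Node 'n "('n, 't) ptree list"

fun root :: "('n, 't) ptree \<Rightarrow> ('n, 't) sym" where
  "root (Leaf a) = T a"
| "root (Node A ts) = N A"

fun fringe :: "('n, 't) ptree \<Rightarrow> 't list" where
  "fringe (Leaf a) = [a]"
| "fringe (Node A ts) = concat (map fringe ts)"

text \<open>This is the length of the derivation encoded by the tree.\<close>
fun inner_nodes :: "('n, 't) ptree \<Rightarrow> nat" where
  "inner_nodes (Leaf a) = 0"
| "inner_nodes (Node A ts) = Suc (sum_list (map inner_nodes ts))"

fun labels :: "('n, 't) ptree \<Rightarrow> 'n set" where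
  "labels (Leaf a) = {}"
| "labels (Node A ts) = insert A (\<Union>t\<in>set ts. labels t)"

fun repetition_free :: "('n, 't) ptree \<Rightarrow> bool" where
  "repetition_free (Leaf a) = True"
| "repetition_free (Node A ts) = (\<forall>t\<in>set ts. A \<notin> labels t \<and> repetition_free t)"

inductive parse_tree :: "('n, 't) prod set \<Rightarrow> ('n, 't) ptree \<Rightarrow> bool" for P where
  parse_tree_Leaf: "parse_tree P (Leaf a)"
| parse_tree_Node: "(A, map root ts) \<in> P \<Longrightarrow> \<forall>t\<in>set ts. parse_tree P t \<Longrightarrow> parse_tree P (Node A ts)"

inductive subtree :: "('n, 't) ptree \<Rightarrow> ('n, 't) ptree \<Rightarrow> bool" where
  subtree_refl: "subtree t t"
| subtree_child: "t \<in> set ts \<Longrightarrow> subtree s t \<Longrightarrow> subtree s (Node A ts)"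

lemma relpowp_derive1_forest:
  assumes "\<forall>t\<in>set ts. (derive1 P ^^ inner_nodes t) [root t] (map T (fringe t))"
  shows "(derive1 P ^^ sum_list (map inner_nodes ts)) (map root ts) (map T (concat (map fringe ts)))"
  using assms
proof (induction ts)
  case (Cons t ts)
  then have "(derive1 P ^^ inner_nodes t) [root t] (map T (fringe t))"
    "(derive1 P ^^ sum_list (map inner_nodes ts)) (map root ts) (map T (concat (map fringe ts)))"
    by auto
  from relpowp_derive1_append[OF this] show ?case by simp
qed simp

lemma relpowp_derive1_parse_tree:
  "parse_tree P t \<Longrightarrow> (derive1 P ^^ inner_nodes t) [root t] (map T (fringe t))"
proof (induction rule: parse_tree.induct)
  case (parse_tree_Node A ts)
  have "derive1 P ([] @ [N A] @ []) ([] @ map root ts @ [])"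
    using parse_tree_Node.hyps(1) by (rule derive1.intros)
  moreover have "(derive1 P ^^ sum_list (map inner_nodes ts)) (map root ts) (map T (concat (map fringe ts)))"
    using parse_tree_Node.IH by (intro relpowp_derive1_forest) auto
  ultimately show ?case by (simp del: relpowp.simps add: relpowp_Suc_I2)
qed simp

lemma relpowp_derive1_parse_forest:
  "(derive1 P ^^ n) xs (map T w) \<Longrightarrow> \<exists>ts. (\<forall>t\<in>set ts. parse_tree P t) \<and> map root ts = xs \<and>
     concat (map fringe ts) = w \<and> sum_list (map inner_nodes ts) = n"
proof (induction n arbitrary: xs)
  case 0
  then show ?case
    by (intro exI[of _ "map Leaf w"]) (auto intro: parse_tree_Leaf simp: comp_def)
next
  case (Suc n)
  from Suc.prems obtain ys where step: "derive1 P xs ys" and rest: "(derive1 P ^^ n) ys (map T w)"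
    by (rule relpowp_Suc_E2)
  from Suc.IH[OF rest] obtain ts where ts: "\<forall>t\<in>set ts. parse_tree P t" "map root ts = ys"
    "concat (map fringe ts) = w" "sum_list (map inner_nodes ts) = n" by blast
  from step show ?case
  proof cases
    case (1 A rhs u v)
    with ts(2) have "map root ts = u @ rhs @ v" by simp
    from this[unfolded map_eq_append_conv] obtain ts1 ts23 where ts23: "ts = ts1 @ ts23"
      "u = map root ts1" "rhs @ v = map root ts23" by (elim exE conjE)
    from ts23(3)[symmetric, unfolded map_eq_append_conv] obtain ts2 ts3 where
      "ts23 = ts2 @ ts3" "rhs = map root ts2" "v = map root ts3" by (elim exE conjE)
    with ts23 have split: "ts = ts1 @ ts2 @ ts3" "map root ts1 = u"
      "map root ts2 = rhs" "map root ts3 = v" by auto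
    have "parse_tree P (Node A ts2)"
      using ts(1) split 1(3) by (intro parse_tree_Node) auto
    with ts split 1(1) show ?thesis
      by (intro exI[of _ "ts1 @ [Node A ts2] @ ts3"]) auto
  qed
qed

lemma relpowp_derive1_parse_tree_exists:
  assumes "(derive1 P ^^ n) [N A] (map T w)"
  shows "\<exists>t. parse_tree P t \<and> root t = N A \<and> fringe t = w \<and> inner_nodes t = n"
proof -
  from relpowp_derive1_parse_forest[OF assms] obtain ts where ts: "\<forall>t\<in>set ts. parse_tree P t"
    "map root ts = [N A]" "concat (map fringe ts) = w" "sum_list (map inner_nodes ts) = n"
    by (elim exE conjE)
  from ts(2) obtain t where "ts = [t]" by (auto simp: map_eq_Cons_conv)
  with ts show ?thesis by (intro exI[of _ t]) simp
qed

lemma Lang_eq_fringes: "Lang P A = {fringe t |t. parse_tree P t \<and> root t = N A}"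
proof (intro set_eqI iffI)
  fix w assume "w \<in> Lang P A"
  then have "(derive1 P)\<^sup>*\<^sup>* [N A] (map T w)" by (simp add: Lang_def derives_def)
  then obtain n where "(derive1 P ^^ n) [N A] (map T w)" unfolding rtranclp_power by blast
  from relpowp_derive1_parse_tree_exists[OF this]
  show "w \<in> {fringe t |t. parse_tree P t \<and> root t = N A}" by blast
next
  fix w assume "w \<in> {fringe t |t. parse_tree P t \<and> root t = N A}"
  then obtain t where t: "parse_tree P t" "root t = N A" "w = fringe t" by blast
  have "(derive1 P)\<^sup>*\<^sup>* [root t] (map T (fringe t))"
    using relpowp_derive1_parse_tree[OF t(1)] by (rule relpowp_imp_rtranclp)
  with t(2,3) show "w \<in> Lang P A" by (simp add: Lang_def derives_def)
qed

lemma fringe_mem_closed: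
  assumes leaf: "\<And>a. [a] \<in> X (T a)"
    and node: "\<And>A w ws. (A, w) \<in> P \<Longrightarrow> list_all2 (\<lambda>s u. u \<in> X s) w ws \<Longrightarrow> concat ws \<in> X (N A)"
  shows "parse_tree P t \<Longrightarrow> fringe t \<in> X (root t)"
proof (induction rule: parse_tree.induct)
  case (parse_tree_Node A ts)
  have "list_all2 (\<lambda>s u. u \<in> X s) (map root ts) (map fringe ts)"
    using parse_tree_Node.IH by (auto simp: list_all2_map1 list_all2_map2 list.rel_refl_strong)
  with node[OF parse_tree_Node.hyps(1)] show ?case by simp
qed (simp add: leaf)

lemma Lang_subset_closed:
  assumes "\<And>a. [a] \<in> X (T a)"
    and "\<And>A w ws. (A, w) \<in> P \<Longrightarrow> list_all2 (\<lambda>s u. u \<in> X s) w ws \<Longrightarrow> concat ws \<in> X (N A)"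
  shows "Lang P S \<subseteq> X (N S)"
  unfolding Lang_eq_fringes using fringe_mem_closed[OF assms] by force

lemma parse_tree_subtree: "subtree s t \<Longrightarrow> parse_tree P t \<Longrightarrow> parse_tree P s"
  by (induction rule: subtree.induct) (auto elim: parse_tree.cases)

lemma relpowp_derive1_child_context:
  assumes tree: "parse_tree P (Node A ts)" and child: "t \<in> set ts"
    and der: "(derive1 P ^^ n) [root t] (map T u @ [X] @ map T z)"
    and fr: "fringe t = u @ w @ z" and size: "inner_nodes t = n + k"
  shows "\<exists>u' z' n'. (derive1 P ^^ Suc n') [N A] (map T u' @ [X] @ map T z') \<and>
     fringe (Node A ts) = u' @ w @ z' \<and> inner_nodes (Node A ts) = Suc n' + k"
proof -
  from tree have prod: "(A, map root ts) \<in> P" and trees: "\<forall>t\<in>set ts. parse_tree P t"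
    by (auto elim: parse_tree.cases)
  from child obtain ts1 ts2 where ts: "ts = ts1 @ t # ts2" by (meson split_list)
  have left: "(derive1 P ^^ sum_list (map inner_nodes ts1)) (map root ts1) (map T (concat (map fringe ts1)))"
    using trees ts by (intro relpowp_derive1_forest) (auto intro: relpowp_derive1_parse_tree)
  have right: "(derive1 P ^^ sum_list (map inner_nodes ts2)) (map root ts2) (map T (concat (map fringe ts2)))"
    using trees ts by (intro relpowp_derive1_forest) (auto intro: relpowp_derive1_parse_tree)
  have "derive1 P ([] @ [N A] @ []) ([] @ map root ts @ [])"
    using prod by (rule derive1.intros)
  then have first: "derive1 P [N A] (map root ts1 @ [root t] @ map root ts2)"
    using ts by simp
  have "(derive1 P ^^ (sum_list (map inner_nodes ts1) + (n + sum_list (map inner_nodes ts2))))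
     (map root ts1 @ [root t] @ map root ts2)
     (map T (concat (map fringe ts1)) @ (map T u @ [X] @ map T z) @ map T (concat (map fringe ts2)))"
    by (intro relpowp_derive1_append der left right)
  with first have "(derive1 P ^^ Suc (sum_list (map inner_nodes ts1) + (n + sum_list (map inner_nodes ts2))))
     [N A] (map T (concat (map fringe ts1) @ u) @ [X] @ map T (z @ concat (map fringe ts2)))"
    by (simp del: relpowp.simps add: relpowp_Suc_I2)
  with ts fr size show ?thesis
    by (intro exI[of _ "concat (map fringe ts1) @ u"] exI[of _ "z @ concat (map fringe ts2)"])
      (simp del: relpowp.simps)
qed

lemma relpowp_derive1_subtree_context:
  "subtree s t \<Longrightarrow> parse_tree P t \<Longrightarrow> \<exists>u z n. (derive1 P ^^ n) [root t] (map T u @ [root s] @ map T z)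
     \<and> fringe t = u @ fringe s @ z \<and> inner_nodes t = n + inner_nodes s"
proof (induction rule: subtree.induct)
  case (subtree_refl t)
  then show ?case by (intro exI[of _ "[]"] exI[of _ 0]) auto
next
  case (subtree_child t ts s A)
  then have "parse_tree P t" by (auto elim: parse_tree.cases)
  from subtree_child.IH[OF this] obtain u z n where
    "(derive1 P ^^ n) [root t] (map T u @ [root s] @ map T z)"
    "fringe t = u @ fringe s @ z" "inner_nodes t = n + inner_nodes s" by (elim exE conjE)
  from relpowp_derive1_child_context[OF subtree_child.prems subtree_child.hyps(1) this]
  obtain u' z' n' where "(derive1 P ^^ Suc n') [N A] (map T u' @ [root s] @ map T z')"
    "fringe (Node A ts) = u' @ fringe s @ z'" "inner_nodes (Node A ts) = Suc n' + inner_nodes s"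
    by (elim exE conjE)
  then show ?case by (intro exI[of _ u'] exI[of _ z'] exI[of _ "Suc n'"]) simp
qed

section \<open>The pumping lemma\<close>

lemma finite_labels: "finite (labels t)"
  by (induction t) auto

lemma labels_parse_tree: "parse_tree P t \<Longrightarrow> labels t \<subseteq> fst ` P"
  by (induction rule: parse_tree.induct) force+

lemma subtree_labelled: "A \<in> labels t \<Longrightarrow> \<exists>s. subtree s t \<and> root s = N A"
proof (induction t)
  case (Node B ts)
  show ?case
  proof (cases "A = B")
    case True
    then show ?thesis by (intro exI[of _ "Node B ts"]) (auto intro: subtree_refl)
  next
    case False
    with Node.prems obtain t where "t \<in> set ts" "A \<in> labels t" by auto
    with Node.IH show ?thesis by (meson subtree_child)
  qed
qed simp

lemma length_fringe_repetition_free: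
  assumes "parse_tree P t" "repetition_free t" "\<forall>(A, w)\<in>P. length w \<le> m" "0 < m"
  shows "length (fringe t) \<le> m ^ card (labels t)"
  using assms
proof (induction rule: parse_tree.induct)
  case (parse_tree_Node A ts)
  let ?K = "card (labels (Node A ts))"
  have child_bound: "length (fringe t) \<le> m ^ (?K - 1)" if child: "t \<in> set ts" for t
  proof -
    from parse_tree_Node.prems(1) child have "A \<notin> labels t" "repetition_free t" by auto
    with parse_tree_Node.IH parse_tree_Node.prems(2,3) child
    have "length (fringe t) \<le> m ^ card (labels t)" by blast
    also have "m ^ card (labels t) \<le> m ^ (?K - 1)"
    proof (rule power_increasing)
      have "card (labels t) \<le> card (labels (Node A ts) - {A})"
        using child \<open>A \<notin> labels t\<close> finite_labels by (intro card_mono) auto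
      also have "\<dots> = ?K - 1" by (intro card_Diff_singleton) simp
      finally show "card (labels t) \<le> ?K - 1" .
    qed (use \<open>0 < m\<close> in simp)
    finally show ?thesis .
  qed
  have "length (fringe (Node A ts)) = (\<Sum>t\<leftarrow>ts. length (fringe t))"
    by (simp add: length_concat comp_def)
  also have "\<dots> \<le> (\<Sum>t\<leftarrow>ts. m ^ (?K - 1))"
    by (rule sum_list_mono) (rule child_bound)
  also have "\<dots> = length ts * m ^ (?K - 1)"
    by (simp add: sum_list_triv)
  also have "\<dots> \<le> m * m ^ (?K - 1)"
    using parse_tree_Node.hyps(1) parse_tree_Node.prems(2) by fastforce
  also have "\<dots> = m ^ ?K"
    using finite_labels[of "Node A ts"] by (cases ?K) auto
  finally show ?case .
qed simp

lemma length_fringe_repetition_free_le: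
  assumes "finite P" "parse_tree P t" "repetition_free t"
  shows "length (fringe t) \<le> Suc (\<Sum>(A, w)\<in>P. length w) ^ card (fst ` P)"
proof -
  let ?m = "Suc (\<Sum>(A, w)\<in>P. length w)"
  have "\<forall>(A, w)\<in>P. length w \<le> ?m"
    using member_le_sum[of _ P "\<lambda>(A, w). length w"] \<open>finite P\<close> by fastforce
  with assms(2,3) have "length (fringe t) \<le> ?m ^ card (labels t)"
    by (intro length_fringe_repetition_free) auto
  also have "\<dots> \<le> ?m ^ card (fst ` P)"
    using labels_parse_tree[OF assms(2)] \<open>finite P\<close> by (intro power_increasing card_mono) auto
  finally show ?thesis .
qed

lemma repeated_label_if_not_repetition_free:
  "\<not> repetition_free t \<Longrightarrow>
     \<exists>B ts t' s. subtree (Node B ts) t \<and> t' \<in> set ts \<and> subtree s t' \<and> root s = N B"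
proof (induction t)
  case (Node A ts)
  then obtain t' where t': "t' \<in> set ts" "A \<in> labels t' \<or> \<not> repetition_free t'" by auto
  show ?case
  proof (cases "A \<in> labels t'")
    case True
    with t'(1) show ?thesis by (meson subtree_labelled subtree_refl)
  next
    case False
    with t' Node.IH obtain B ts' t'' s where "subtree (Node B ts') t'" "t'' \<in> set ts'"
      "subtree s t''" "root s = N B" by blast
    with t'(1) show ?thesis by (meson subtree_child)
  qed
qed simp

lemma relpowp_derive1_repeated_label:
  assumes tree: "parse_tree P t" and outer: "subtree (Node B ts) t"
    and inner: "t' \<in> set ts" "subtree s t'" "root s = N B"
  shows "\<exists>u v x y z n1 n2 n3. fringe t = u @ v @ x @ y @ z \<and>
    (derive1 P ^^ n1) [root t] (map T u @ [N B] @ map T z) \<and>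
    (derive1 P ^^ n2) [N B] (map T v @ [N B] @ map T y) \<and> 0 < n2 \<and>
    (derive1 P ^^ n3) [N B] (map T x) \<and> inner_nodes t = n1 + n2 + n3"
proof -
  have tree_B: "parse_tree P (Node B ts)" using outer tree by (rule parse_tree_subtree)
  then have tree_t': "parse_tree P t'" using inner(1) by (auto elim: parse_tree.cases)
  have tree_s: "parse_tree P s" using inner(2) tree_t' by (rule parse_tree_subtree)
  from relpowp_derive1_subtree_context[OF outer tree] obtain u z n1 where
    d1: "(derive1 P ^^ n1) [root t] (map T u @ [N B] @ map T z)"
    and f1: "fringe t = u @ fringe (Node B ts) @ z"
    and s1: "inner_nodes t = n1 + inner_nodes (Node B ts)" by (elim exE conjE) simp
  from relpowp_derive1_subtree_context[OF inner(2) tree_t'] obtain v' y' n' where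
    "(derive1 P ^^ n') [root t'] (map T v' @ [root s] @ map T y')"
    "fringe t' = v' @ fringe s @ y'" "inner_nodes t' = n' + inner_nodes s" by (elim exE conjE)
  from relpowp_derive1_child_context[OF tree_B inner(1) this] obtain v y n2 where
    d2: "(derive1 P ^^ Suc n2) [N B] (map T v @ [N B] @ map T y)"
    and f2: "fringe (Node B ts) = v @ fringe s @ y"
    and s2: "inner_nodes (Node B ts) = Suc n2 + inner_nodes s"
    using inner(3) by (elim exE conjE) (simp del: relpowp.simps)
  have d3: "(derive1 P ^^ inner_nodes s) [N B] (map T (fringe s))"
    using relpowp_derive1_parse_tree[OF tree_s] inner(3) by simp
  have "fringe t = u @ v @ fringe s @ y @ z" using f1 f2 by simp
  moreover have "inner_nodes t = n1 + Suc n2 + inner_nodes s" using s1 s2 by simp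
  ultimately show ?thesis
    using d1 d2 d3 by (intro exI[of _ u] exI[of _ v] exI[of _ "fringe s"] exI[of _ y]
      exI[of _ z] exI[of _ n1] exI[of _ "Suc n2"] exI[of _ "inner_nodes s"] conjI zero_less_Suc)
qed

lemma derives_pumped:
  assumes "derives P [N S] (map T u @ [N B] @ map T z)"
    and "derives P [N B] (map T v @ [N B] @ map T y)" and "derives P [N B] (map T x)"
  shows "u @ concat (replicate k v) @ x @ concat (replicate k y) @ z \<in> Lang P S"
proof -
  let ?v = "map T (concat (replicate k v))" and ?y = "map T (concat (replicate k y))"
  have "derives P [N S] (map T u @ (?v @ [N B] @ ?y) @ map T z)"
    using derives_trans[OF assms(1) derives_context[OF derives_iterate[OF assms(2)]]] .
  then have "derives P [N S] ((map T u @ ?v) @ [N B] @ (?y @ map T z))" by simp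
  from derives_trans[OF this derives_context[OF assms(3)]] show ?thesis
    by (simp add: Lang_def)
qed

lemma minimal_parse_tree:
  assumes "w \<in> Lang P S"
  obtains t where "parse_tree P t" "root t = N S" "fringe t = w"
    "\<And>n. (derive1 P ^^ n) [N S] (map T w) \<Longrightarrow> inner_nodes t \<le> n"
proof -
  from assms have "\<exists>n. (derive1 P ^^ n) [N S] (map T w)"
    by (simp add: Lang_def derives_def rtranclp_power)
  define n0 where "n0 = (LEAST n. (derive1 P ^^ n) [N S] (map T w))"
  have "(derive1 P ^^ n0) [N S] (map T w)"
    unfolding n0_def using \<open>\<exists>n. _\<close> by (rule LeastI_ex)
  from relpowp_derive1_parse_tree_exists[OF this] obtain t where
    "parse_tree P t" "root t = N S" "fringe t = w" "inner_nodes t = n0" by (elim exE conjE)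
  with that show thesis unfolding n0_def by (metis Least_le)
qed

theorem Lang_pumping:
  assumes "finite P"
  shows "\<exists>c. \<forall>w \<in> Lang P S. c < length w \<longrightarrow> (\<exists>u v x y z. w = u @ v @ x @ y @ z \<and> v @ y \<noteq> [] \<and>
     (\<forall>k. u @ concat (replicate k v) @ x @ concat (replicate k y) @ z \<in> Lang P S))"
proof (intro exI[of _ "Suc (\<Sum>(A, rhs)\<in>P. length rhs) ^ card (fst ` P)"] ballI impI)
  fix w assume w: "w \<in> Lang P S"
    and long: "Suc (\<Sum>(A, rhs)\<in>P. length rhs) ^ card (fst ` P) < length w"
  from w obtain t where t: "parse_tree P t" "root t = N S" "fringe t = w"
    and minimal: "\<And>n. (derive1 P ^^ n) [N S] (map T w) \<Longrightarrow> inner_nodes t \<le> n"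
    by (rule minimal_parse_tree) blast
  have "\<not> repetition_free t"
    using length_fringe_repetition_free_le[OF assms t(1)] long t(3) by (metis leD)
  from repeated_label_if_not_repetition_free[OF this] obtain B ts t' s where
    "subtree (Node B ts) t" "t' \<in> set ts" "subtree s t'" "root s = N B" by (elim exE conjE)
  from relpowp_derive1_repeated_label[OF t(1) this] obtain u v x y z n1 n2 n3 where
    "fringe t = u @ v @ x @ y @ z" and d1: "(derive1 P ^^ n1) [root t] (map T u @ [N B] @ map T z)"
    and d2: "(derive1 P ^^ n2) [N B] (map T v @ [N B] @ map T y)" and "0 < n2"
    and d3: "(derive1 P ^^ n3) [N B] (map T x)" and size: "inner_nodes t = n1 + n2 + n3"
    by (elim exE conjE)
  with t have split: "w = u @ v @ x @ y @ z"
    and d1: "(derive1 P ^^ n1) [N S] (map T u @ [N B] @ map T z)" by simp_all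
  have "v @ y \<noteq> []"
  proof
    assume "v @ y = []"
    with split have "(derive1 P ^^ (n1 + n3)) [N S] (map T w)"
      using relpowp_trans[OF d1 relpowp_derive1_context[OF d3, of "map T u" "map T z"]] by simp
    with minimal size \<open>0 < n2\<close> show False by fastforce
  qed
  moreover have "u @ concat (replicate k v) @ x @ concat (replicate k y) @ z \<in> Lang P S" for k
    using d1 d2 d3 unfolding derives_def
    by (intro derives_pumped[unfolded derives_def] relpowp_imp_rtranclp)
  ultimately show "\<exists>u v x y z. w = u @ v @ x @ y @ z \<and> v @ y \<noteq> [] \<and>
     (\<forall>k. u @ concat (replicate k v) @ x @ concat (replicate k y) @ z \<in> Lang P S)"
    using split by (intro exI[of _ u] exI[of _ v] exI[of _ x] exI[of _ y] exI[of _ z]) simp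
qed

corollary CFL_pumping:
  assumes "CFL L"
  shows "\<exists>c. \<forall>w \<in> L. c < length w \<longrightarrow> (\<exists>u v x y z. w = u @ v @ x @ y @ z \<and> v @ y \<noteq> [] \<and>
     (\<forall>k. u @ concat (replicate k v) @ x @ concat (replicate k y) @ z \<in> L))"
proof -
  from assms obtain P :: "(nat, 'a) prod set" and S where "finite P" "L = Lang P S"
    unfolding CFL_def by blast
  with Lang_pumping[of P S] show ?thesis by simp
qed

lemma prefix_avoiding: "prefix p (xs @ s # ys) \<Longrightarrow> s \<notin> set p \<Longrightarrow> prefix p xs"
  by (auto simp: prefix_append prefix_Cons)

lemma suffix_avoiding: "suffix q (xs @ s # ys) \<Longrightarrow> s \<notin> set q \<Longrightarrow> suffix q ys"
  by (auto simp: suffix_append suffix_Cons)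

lemma sublist_avoiding: "sublist v (xs @ s # ys) \<Longrightarrow> s \<notin> set v \<Longrightarrow> sublist v xs \<or> sublist v ys"
  by (auto simp: sublist_append sublist_Cons_right prefix_Cons)

lemma count_list_replicate [simp]: "count_list (replicate n a) b = (if a = b then n else 0)"
  by (induction n) auto

lemma count_list_eq_0_if_subset_singleton: "set xs \<subseteq> {a} \<Longrightarrow> b \<noteq> a \<Longrightarrow> count_list xs b = 0"
  by (auto simp: count_list_0_iff)

section \<open>The witness language\<close>

text \<open>Letters \<open>0, 1, 2\<close> stand for a, b, c and \<open>3, 4\<close> for the markers # and $, so that
  \<open>left_word n\<close> is a^n # b^n $, \<open>right_word n\<close> is # b^n $ c^n and \<open>full_word n\<close> is a^n # b^n $ c^n.\<close>

definition block01 :: "nat \<Rightarrow> nat list" where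
  "block01 n = replicate n 0 @ 3 # replicate n 1"

definition block12 :: "nat \<Rightarrow> nat list" where
  "block12 n = replicate n 1 @ 4 # replicate n 2"

definition left_word :: "nat \<Rightarrow> nat list" where
  "left_word n = block01 n @ [4]"

definition right_word :: "nat \<Rightarrow> nat list" where
  "right_word n = 3 # block12 n"

definition full_word :: "nat \<Rightarrow> nat list" where
  "full_word n = replicate n 0 @ 3 # replicate n 1 @ 4 # replicate n 2"

definition witness_lang :: "nat list set" where
  "witness_lang = range left_word \<union> range right_word"

text \<open>S \<rightarrow> A $ | # B, A \<rightarrow> a A b | #, B \<rightarrow> b B c | $, with S, A, B numbered 0, 1, 2.\<close>

definition witness_grammar :: "(nat, nat) prod set" where
  "witness_grammar = {(0, [N 1, T 4]), (0, [T 3, N 2]),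
     (1, [T 0, N 1, T 1]), (1, [T 3]), (2, [T 1, N 2, T 2]), (2, [T 4])}"

fun witness_sym_lang :: "(nat, nat) sym \<Rightarrow> nat list set" where
  "witness_sym_lang (T a) = {[a]}"
| "witness_sym_lang (N A) =
     (if A = 0 then witness_lang else if A = 1 then range block01 else range block12)"

lemma Lang_witness_grammar_subset: "Lang witness_grammar 0 \<subseteq> witness_lang"
proof -
  have "Lang witness_grammar 0 \<subseteq> witness_sym_lang (N 0)"
  proof (rule Lang_subset_closed)
    fix A w ws assume "(A, w) \<in> witness_grammar" and ws: "list_all2 (\<lambda>s u. u \<in> witness_sym_lang s) w ws"
    then consider "A = 0" "w = [N 1, T 4]" | "A = 0" "w = [T 3, N 2]" | "A = 1" "w = [T 0, N 1, T 1]"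
      | "A = 1" "w = [T 3]" | "A = 2" "w = [T 1, N 2, T 2]" | "A = 2" "w = [T 4]"
      unfolding witness_grammar_def by blast
    then show "concat ws \<in> witness_sym_lang (N A)"
    proof cases
      case 1
      with ws obtain n where "concat ws = left_word n"
        by (auto simp: list_all2_Cons1 left_word_def)
      with 1 show ?thesis by (simp add: witness_lang_def)
    next
      case 2
      with ws obtain n where "concat ws = right_word n"
        by (auto simp: list_all2_Cons1 right_word_def)
      with 2 show ?thesis by (simp add: witness_lang_def)
    next
      case 3
      with ws obtain n where "concat ws = block01 (Suc n)"
        by (auto simp: list_all2_Cons1 block01_def replicate_append_same)
      with 3 show ?thesis by simp
    next
      case 4
      with ws have "concat ws = block01 0"
        by (auto simp: list_all2_Cons1 block01_def)
      with 4 show ?thesis by simp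
    next
      case 5
      with ws obtain n where "concat ws = block12 (Suc n)"
        by (auto simp: list_all2_Cons1 block12_def replicate_append_same)
      with 5 show ?thesis by simp
    next
      case 6
      with ws have "concat ws = block12 0"
        by (auto simp: list_all2_Cons1 block12_def)
      with 6 show ?thesis by simp
    qed
  qed simp
  then show ?thesis by simp
qed

lemma witness_lang_subset_Lang: "witness_lang \<subseteq> Lang witness_grammar 0"
proof
  have derives_block01: "derives witness_grammar [N 1] (map T (block01 n))" for n
  proof -
    have "derives witness_grammar [N 1] (map T (replicate n 0) @ [N 1] @ map T (replicate n 1))"
      by (rule derives_replicate) (simp add: witness_grammar_def)
    also have "derives witness_grammar (map T (replicate n 0) @ [N 1] @ map T (replicate n 1))
        (map T (replicate n 0) @ [T 3] @ map T (replicate n 1))"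
      by (rule derives_prod) (simp add: witness_grammar_def)
    finally show ?thesis by (simp add: block01_def)
  qed
  have derives_block12: "derives witness_grammar [N 2] (map T (block12 n))" for n
  proof -
    have "derives witness_grammar [N 2] (map T (replicate n 1) @ [N 2] @ map T (replicate n 2))"
      by (rule derives_replicate) (simp add: witness_grammar_def)
    also have "derives witness_grammar (map T (replicate n 1) @ [N 2] @ map T (replicate n 2))
        (map T (replicate n 1) @ [T 4] @ map T (replicate n 2))"
      by (rule derives_prod) (simp add: witness_grammar_def)
    finally show ?thesis by (simp add: block12_def)
  qed
  fix w assume "w \<in> witness_lang"
  then consider n where "w = left_word n" | n where "w = right_word n"
    unfolding witness_lang_def by blast
  then show "w \<in> Lang witness_grammar 0"
  proof cases
    case 1
    have "derives witness_grammar [N 0] [N 1, T 4]"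
      using derives_prod[of 0 "[N 1, T 4]" witness_grammar "[]" "[]"] by (simp add: witness_grammar_def)
    also have "derives witness_grammar [N 1, T 4] (map T (block01 n) @ [T 4])"
      using derives_context[OF derives_block01, of "[]" "[T 4]"] by simp
    finally show ?thesis using 1 by (simp add: Lang_def left_word_def)
  next
    case 2
    have "derives witness_grammar [N 0] [T 3, N 2]"
      using derives_prod[of 0 "[T 3, N 2]" witness_grammar "[]" "[]"] by (simp add: witness_grammar_def)
    also have "derives witness_grammar [T 3, N 2] (T 3 # map T (block12 n))"
      using derives_context[OF derives_block12, of "[T 3]" "[]"] by simp
    finally show ?thesis using 2 by (simp add: Lang_def right_word_def)
  qed
qed

lemma CFL_witness_lang: "CFL witness_lang"
proof -
  have "finite witness_grammar" by (simp add: witness_grammar_def)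
  moreover have "witness_lang = Lang witness_grammar 0"
    using Lang_witness_grammar_subset witness_lang_subset_Lang by blast
  ultimately show ?thesis unfolding CFL_def by blast
qed

lemma full_word_sublist_constant:
  assumes "sublist v (full_word n)" "3 \<notin> set v" "4 \<notin> set v"
  shows "\<exists>a. set v \<subseteq> {a}"
proof -
  have "sublist v (replicate n 0 @ 3 # (replicate n 1 @ 4 # replicate n 2))"
    using assms(1) by (simp add: full_word_def)
  then have "sublist v (replicate n 0) \<or> sublist v (replicate n 1 @ 4 # replicate n 2)"
    using assms(2) by (rule sublist_avoiding)
  then have "\<exists>a. sublist v (replicate n a)"
    using sublist_avoiding[OF _ assms(3)] by blast
  then obtain a where "set v \<subseteq> set (replicate n a)" using set_mono_sublist by blast
  then show ?thesis by (auto dest: in_set_replicate[THEN iffD1])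
qed

lemma count_list_full_word:
  "count_list (full_word n) 0 = n" "count_list (full_word n) 1 = n" "count_list (full_word n) 2 = n"
  "count_list (full_word n) 3 = 1" "count_list (full_word n) 4 = 1"
  by (simp_all add: full_word_def)

lemma full_word_factors_unbalanced:
  assumes w: "full_word n = u @ v @ x @ y @ z" and "v @ y \<noteq> []"
    and no_markers: "3 \<notin> set (v @ y)" "4 \<notin> set (v @ y)"
  shows "count_list (v @ y) 0 \<noteq> count_list (v @ y) 1 \<or> count_list (v @ y) 1 \<noteq> count_list (v @ y) 2"
proof (rule ccontr)
  assume "\<not> ?thesis"
  then have balanced: "count_list (v @ y) 0 = count_list (v @ y) 1"
    "count_list (v @ y) 1 = count_list (v @ y) 2" by simp_all
  obtain l where l: "l \<in> set (v @ y)" using \<open>v @ y \<noteq> []\<close> by (metis ex_in_conv set_empty)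
  moreover have "set (v @ y) \<subseteq> set (full_word n)" unfolding w by auto
  ultimately have "l \<in> {0, 1, 2}"
    using no_markers by (auto simp: full_word_def)
  moreover have "count_list (v @ y) l \<noteq> 0" using l by (simp only: count_list_0_iff not_not)
  ultimately have "count_list (v @ y) a \<noteq> 0" if "a \<in> {0, 1, 2}" for a
    using balanced that by auto
  then have letters: "a \<in> set v \<union> set y" if "a \<in> {0, 1, 2}" for a
    using that by (metis count_list_0_iff set_append)
  have "sublist v (full_word n)" "sublist y (full_word n)"
    unfolding w sublist_def by (intro exI[of _ u] exI[of _ "x @ y @ z"]; simp)
      (intro exI[of _ "u @ v @ x"] exI[of _ z]; simp)
  with no_markers obtain a b where "set v \<subseteq> {a}" "set y \<subseteq> {b}"
    using full_word_sublist_constant by (metis set_append UnCI)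
  with letters have "(0::nat) \<in> {a, b}" "(1::nat) \<in> {a, b}" "(2::nat) \<in> {a, b}" by blast+
  then show False by auto
qed

lemma not_CFL_if_balanced_on_markers:
  fixes K :: "nat list set"
  assumes markers: "\<And>r. r \<in> K \<Longrightarrow> 3 \<in> set r \<and> 4 \<in> set r"
    and balanced: "\<And>r. r \<in> K \<Longrightarrow> count_list r 3 = 1 \<Longrightarrow> count_list r 4 = 1 \<Longrightarrow>
      0 \<in> set r \<Longrightarrow> 2 \<in> set r \<Longrightarrow> count_list r 0 = count_list r 1 \<and> count_list r 1 = count_list r 2"
    and words: "\<And>n. full_word n \<in> K"
  shows "\<not> CFL K"
proof
  assume "CFL K"
  from CFL_pumping[OF this] obtain c where pump: "\<forall>w\<in>K. c < length w \<longrightarrow>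
    (\<exists>u v x y z. w = u @ v @ x @ y @ z \<and> v @ y \<noteq> [] \<and>
      (\<forall>k. u @ concat (replicate k v) @ x @ concat (replicate k y) @ z \<in> K))" by (elim exE)
  define n where "n = Suc c"
  have "c < length (full_word n)" by (simp add: full_word_def n_def)
  with bspec[OF pump words[of n]] obtain u v x y z where w: "full_word n = u @ v @ x @ y @ z"
    and "v @ y \<noteq> []"
    and pumped: "\<forall>k. u @ concat (replicate k v) @ x @ concat (replicate k y) @ z \<in> K"
    by (elim impE exE conjE)
  let ?r = "u @ v @ v @ x @ y @ y @ z"
  have down: "count_list (full_word n) a = count_list (u @ x @ z) a + count_list (v @ y) a" for a
    unfolding w by simp
  have up: "count_list ?r a = count_list (full_word n) a + count_list (v @ y) a" for a
    unfolding w by simp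
  have "3 \<in> set (u @ x @ z)" "4 \<in> set (u @ x @ z)"
    using markers[OF pumped[rule_format, of 0]] by simp_all
  then have "0 < count_list (u @ x @ z) 3" "0 < count_list (u @ x @ z) 4"
    by (metis count_list_0_iff neq0_conv)+
  then have no_markers: "count_list (v @ y) 3 = 0" "count_list (v @ y) 4 = 0"
    using down[of 3] down[of 4] count_list_full_word(4,5)[of n] by linarith+
  have "?r \<in> K" using pumped[rule_format, of 2] by (simp add: numeral_2_eq_2)
  moreover have "count_list ?r 3 = 1" "count_list ?r 4 = 1"
    using up[of 3] up[of 4] no_markers count_list_full_word(4,5)[of n] by linarith+
  moreover have "0 < count_list ?r 0" "0 < count_list ?r 2"
    using up[of 0] up[of 2] count_list_full_word(1,3)[of n] n_def by linarith+
  then have "0 \<in> set ?r" "2 \<in> set ?r" by (metis count_list_0_iff less_irrefl)+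
  ultimately have "count_list ?r 0 = count_list ?r 1 \<and> count_list ?r 1 = count_list ?r 2"
    using balanced by blast
  then have "count_list (v @ y) 0 = count_list (v @ y) 1 \<and> count_list (v @ y) 1 = count_list (v @ y) 2"
    using up[of 0] up[of 1] up[of 2] count_list_full_word(1-3)[of n] by linarith
  moreover have "3 \<notin> set (v @ y)" "4 \<notin> set (v @ y)"
    using no_markers by (metis count_list_0_iff)+
  ultimately show False using full_word_factors_unbalanced[OF w \<open>v @ y \<noteq> []\<close>] by blast
qed

section \<open>Guided insertion into the witness language\<close>

lemma witness_lang_cases [consumes 1, case_names left right]:
  "w \<in> witness_lang \<Longrightarrow> (\<And>n. w = left_word n \<Longrightarrow> P) \<Longrightarrow> (\<And>n. w = right_word n \<Longrightarrow> P) \<Longrightarrow> P"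
  unfolding witness_lang_def by blast

lemma count_list_witness_lang_markers:
  "w \<in> witness_lang \<Longrightarrow> count_list w 3 = 1 \<and> count_list w 4 = 1"
  by (induction rule: witness_lang_cases)
    (simp_all add: left_word_def right_word_def block01_def block12_def)

lemma witness_lang_prefix:
  assumes "w \<in> witness_lang" "prefix p w" "3 \<notin> set p"
  shows "set p \<subseteq> {0}"
  using assms(1)
proof (induction rule: witness_lang_cases)
  case (left n)
  then have "prefix p (replicate n 0 @ 3 # (replicate n 1 @ [4]))"
    using assms(2) by (simp add: left_word_def block01_def)
  then have "prefix p (replicate n 0)" using assms(3) by (rule prefix_avoiding)
  from set_mono_prefix[OF this] show ?case by auto
next
  case (right n)
  then have "prefix p ([] @ 3 # block12 n)" using assms(2) by (simp add: right_word_def)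
  then have "prefix p []" using assms(3) by (rule prefix_avoiding)
  then show ?case by simp
qed

lemma witness_lang_suffix:
  assumes "w \<in> witness_lang" "suffix q w" "4 \<notin> set q"
  shows "set q \<subseteq> {2}"
  using assms(1)
proof (induction rule: witness_lang_cases)
  case (left n)
  then have "suffix q (block01 n @ 4 # [])" using assms(2) by (simp add: left_word_def)
  then have "suffix q []" using assms(3) by (rule suffix_avoiding)
  then show ?case by simp
next
  case (right n)
  then have "suffix q ((3 # replicate n 1) @ 4 # replicate n 2)"
    using assms(2) by (simp add: right_word_def block12_def)
  then have "suffix q (replicate n 2)" using assms(3) by (rule suffix_avoiding)
  from set_mono_suffix[OF this] show ?case by auto
qed

lemma count_list_witness_lang_left:
  "w \<in> witness_lang \<Longrightarrow> 0 \<in> set w \<Longrightarrow> count_list w 1 = count_list w 0 \<and> count_list w 2 = 0"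
  by (induction rule: witness_lang_cases)
    (simp_all add: left_word_def right_word_def block01_def block12_def)

lemma count_list_witness_lang_right:
  "w \<in> witness_lang \<Longrightarrow> 2 \<in> set w \<Longrightarrow> count_list w 1 = count_list w 2 \<and> count_list w 0 = 0"
  by (induction rule: witness_lang_cases)
    (simp_all add: left_word_def right_word_def block01_def block12_def)

lemma pgi_witness_lang_balanced:
  assumes x: "x \<in> witness_lang" and y: "y \<in> witness_lang" and r: "r \<in> pgi x y"
    and markers: "count_list r 3 = 1" "count_list r 4 = 1" and letters: "0 \<in> set r" "2 \<in> set r"
  shows "count_list r 0 = count_list r 1 \<and> count_list r 1 = count_list r 2"
proof -
  from r obtain x1 y1 y2 x2 where r_eq: "r = x1 @ y1 @ y2 @ x2"
    and x_eq: "x = x1 @ y1 @ x2" and y_eq: "y = y1 @ y2" unfolding pgi_def by blast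
  have count_r: "count_list r a = count_list x a + count_list y2 a"
    and count_x: "count_list x a = count_list x1 a + count_list y1 a + count_list x2 a"
    and count_y: "count_list y a = count_list y1 a + count_list y2 a" for a
    using r_eq x_eq y_eq by simp_all
  note x_markers = count_list_witness_lang_markers[OF x]
    and y_markers = count_list_witness_lang_markers[OF y]
  \<comment> \<open>As \<open>r\<close> has a single marker of each kind, the guide \<open>y1\<close> carries both markers of \<open>y\<close>.\<close>
  have "count_list y2 4 = 0" "count_list y1 3 = 1" "count_list y1 4 = 1"
    using count_r[of 3] count_r[of 4] count_y[of 3] count_y[of 4] markers x_markers y_markers
    by linarith+
  then have "count_list x1 3 = 0" "count_list x2 4 = 0"
    using count_x[of 3] count_x[of 4] x_markers by linarith+
  then have "set x1 \<subseteq> {0}" "set x2 \<subseteq> {2}"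
    using witness_lang_prefix[OF x] witness_lang_suffix[OF x] x_eq
    by (simp_all add: count_list_0_iff prefix_def suffix_def)
  moreover have "set y2 \<subseteq> {2}"
    using witness_lang_suffix[OF y] y_eq \<open>count_list y2 4 = 0\<close>
    by (simp add: count_list_0_iff suffix_def)
  ultimately have zeros: "count_list x1 1 = 0" "count_list x2 1 = 0"
    "count_list y2 0 = 0" "count_list y2 1 = 0"
    by (simp_all add: count_list_eq_0_if_subset_singleton)
  have "0 \<in> set x" using letters(1) r_eq x_eq \<open>set y2 \<subseteq> {2}\<close> by auto
  with x have x_counts: "count_list x 1 = count_list x 0" "count_list x 2 = 0"
    using count_list_witness_lang_left by blast+
  with letters(2) r_eq x_eq y_eq have "2 \<in> set y" by (auto simp: count_list_0_iff)
  with y have "count_list y 1 = count_list y 2"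
    using count_list_witness_lang_right by blast
  then show ?thesis
    using count_r[of 0] count_r[of 1] count_r[of 2] count_x[of 1] count_x[of 2]
      count_y[of 1] count_y[of 2] x_counts zeros
    by linarith
qed

lemma sgi_witness_lang_balanced:
  assumes x: "x \<in> witness_lang" and y: "y \<in> witness_lang" and r: "r \<in> sgi x y"
    and markers: "count_list r 3 = 1" "count_list r 4 = 1" and letters: "0 \<in> set r" "2 \<in> set r"
  shows "count_list r 0 = count_list r 1 \<and> count_list r 1 = count_list r 2"
proof -
  from r obtain x1 y1 y2 x2 where r_eq: "r = x1 @ y1 @ y2 @ x2"
    and x_eq: "x = x1 @ y2 @ x2" and y_eq: "y = y1 @ y2" unfolding sgi_def by blast
  have count_r: "count_list r a = count_list x a + count_list y1 a"
    and count_x: "count_list x a = count_list x1 a + count_list y2 a + count_list x2 a"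
    and count_y: "count_list y a = count_list y1 a + count_list y2 a" for a
    using r_eq x_eq y_eq by simp_all
  note x_markers = count_list_witness_lang_markers[OF x]
    and y_markers = count_list_witness_lang_markers[OF y]
  \<comment> \<open>As \<open>r\<close> has a single marker of each kind, the guide \<open>y2\<close> carries both markers of \<open>y\<close>.\<close>
  have "count_list y1 3 = 0" "count_list y2 3 = 1" "count_list y2 4 = 1"
    using count_r[of 3] count_r[of 4] count_y[of 3] count_y[of 4] markers x_markers y_markers
    by linarith+
  then have "count_list x1 3 = 0" "count_list x2 4 = 0"
    using count_x[of 3] count_x[of 4] x_markers by linarith+
  then have "set x1 \<subseteq> {0}" "set x2 \<subseteq> {2}"
    using witness_lang_prefix[OF x] witness_lang_suffix[OF x] x_eq
    by (simp_all add: count_list_0_iff prefix_def suffix_def)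
  moreover have "set y1 \<subseteq> {0}"
    using witness_lang_prefix[OF y] y_eq \<open>count_list y1 3 = 0\<close>
    by (simp add: count_list_0_iff prefix_def)
  ultimately have zeros: "count_list x1 1 = 0" "count_list x2 1 = 0"
    "count_list y1 1 = 0" "count_list y1 2 = 0"
    by (simp_all add: count_list_eq_0_if_subset_singleton)
  have "2 \<in> set x" using letters(2) r_eq x_eq \<open>set y1 \<subseteq> {0}\<close> by auto
  with x have x_counts: "count_list x 1 = count_list x 2" "count_list x 0 = 0"
    using count_list_witness_lang_right by blast+
  with letters(1) r_eq x_eq y_eq have "0 \<in> set y" by (auto simp: count_list_0_iff)
  with y have "count_list y 1 = count_list y 0"
    using count_list_witness_lang_left by blast
  then show ?thesis
    using count_r[of 0] count_r[of 1] count_r[of 2] count_x[of 0] count_x[of 1]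
      count_y[of 0] count_y[of 1] x_counts zeros
    by linarith
qed

lemma set_pgi: "r \<in> pgi x y \<Longrightarrow> set y \<subseteq> set r"
  unfolding pgi_def by auto

lemma set_sgi: "r \<in> sgi x y \<Longrightarrow> set y \<subseteq> set r"
  unfolding sgi_def by auto

lemma full_word_pgi: "full_word n \<in> pgi (left_word n) (right_word n)"
  unfolding pgi_def full_word_def left_word_def right_word_def block01_def block12_def
  by (rule CollectI, rule exI[of _ "replicate n 0"], rule exI[of _ "3 # replicate n 1 @ [4]"],
      rule exI[of _ "replicate n 2"], rule exI[of _ "[]"]) simp

lemma full_word_sgi: "full_word n \<in> sgi (right_word n) (left_word n)"
  unfolding sgi_def full_word_def left_word_def right_word_def block01_def block12_def
  by (rule CollectI, rule exI[of _ "[]"], rule exI[of _ "replicate n 0"],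
      rule exI[of _ "3 # replicate n 1 @ [4]"], rule exI[of _ "replicate n 2"]) simp

lemma markers_in_witness_lang: "w \<in> witness_lang \<Longrightarrow> 3 \<in> set w \<and> 4 \<in> set w"
  by (induction rule: witness_lang_cases)
    (simp_all add: left_word_def right_word_def block01_def block12_def)

lemma not_CFL_pgi_witness_lang: "\<not> CFL (pgi_lang witness_lang witness_lang)"
proof (rule not_CFL_if_balanced_on_markers)
  fix r assume "r \<in> pgi_lang witness_lang witness_lang"
  then obtain x y where "x \<in> witness_lang" "y \<in> witness_lang" "r \<in> pgi x y"
    unfolding pgi_lang_def by blast
  then show "3 \<in> set r \<and> 4 \<in> set r"
    and "count_list r 3 = 1 \<Longrightarrow> count_list r 4 = 1 \<Longrightarrow> 0 \<in> set r \<Longrightarrow> 2 \<in> set r \<Longrightarrow>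
      count_list r 0 = count_list r 1 \<and> count_list r 1 = count_list r 2"
    using markers_in_witness_lang set_pgi pgi_witness_lang_balanced by blast+
next
  show "full_word n \<in> pgi_lang witness_lang witness_lang" for n
    using full_word_pgi unfolding pgi_lang_def witness_lang_def by blast
qed

lemma not_CFL_sgi_witness_lang: "\<not> CFL (sgi_lang witness_lang witness_lang)"
proof (rule not_CFL_if_balanced_on_markers)
  fix r assume "r \<in> sgi_lang witness_lang witness_lang"
  then obtain x y where "x \<in> witness_lang" "y \<in> witness_lang" "r \<in> sgi x y"
    unfolding sgi_lang_def by blast
  then show "3 \<in> set r \<and> 4 \<in> set r"
    and "count_list r 3 = 1 \<Longrightarrow> count_list r 4 = 1 \<Longrightarrow> 0 \<in> set r \<Longrightarrow> 2 \<in> set r \<Longrightarrow>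
      count_list r 0 = count_list r 1 \<and> count_list r 1 = count_list r 2"
    using markers_in_witness_lang set_sgi sgi_witness_lang_balanced by blast+
next
  show "full_word n \<in> sgi_lang witness_lang witness_lang" for n
    using full_word_sgi unfolding sgi_lang_def witness_lang_def by blast
qed

theorem corollary5p2:
  shows "\<exists>(L1 :: nat list set) (L2 :: nat list set).
           CFL L1 \<and> CFL L2 \<and> \<not> CFL (pgi_lang L1 L1) \<and> \<not> CFL (sgi_lang L2 L2)"
  using CFL_witness_lang not_CFL_pgi_witness_lang not_CFL_sgi_witness_lang by blast

end
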